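(* Let $f:2^N\to\mathbb R_{\ge0}$ be monotone submodular, $|N|=n$ with $\sqrt n$ an integer, $1\le k\le n$, and $S^\star\in\arg\max_{|T|\le k}f(T)$. If $\mathbb E_{S\sim\mathcal D_{\sqrt n}}[f(S)]\ge f(S^\star)/4$, then a uniformly random set $S$ of size $k$ satisfies $\mathbb E[f(S)]\ge\min(1/4,\,k/(4\sqrt n))\,f(S^\star)$.
   Context: $\mathcal D_j$ denotes the uniform distribution over subsets of $N$ of size $j$. $f$ monotone: $f(A)\le f(B)$ for $A\subseteq B$; submodular: $f(A\cup\{e\})-f(A)\ge f(B\cup\{e\})-f(B)$ for $A\subseteq B$. *)

theory Defs
  imports "HOL-Probability.Probability"
begin

definition monotone_setfun :: "'a set \<Rightarrow> ('a set \<Rightarrow> real) \<Rightarrow> bool" where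
  "monotone_setfun N f \<longleftrightarrow> (\<forall>A B. A \<subseteq> B \<and> B \<subseteq> N \<longrightarrow> f A \<le> f B)"

definition submodular_setfun :: "'a set \<Rightarrow> ('a set \<Rightarrow> real) \<Rightarrow> bool" where
  "submodular_setfun N f \<longleftrightarrow>
     (\<forall>A B e. A \<subseteq> B \<and> B \<subseteq> N \<and> e \<in> N \<longrightarrow>
        f (A \<union> {e}) - f A \<ge> f (B \<union> {e}) - f B)"

definition expect_unif :: "'a set \<Rightarrow> nat \<Rightarrow> ('a set \<Rightarrow> real) \<Rightarrow> real" where
  "expect_unif N j f =
     measure_pmf.expectation (pmf_of_set {S. S \<subseteq> N \<and> card S = j}) f"

end

theory Submission
  imports Defs
begin

text \<open>Write \<open>F j\<close> for the sum of \<open>f\<close> over the \<open>j\<close>-subsets of \<open>N\<close>, so the expectation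
  under \<open>D_j\<close> is \<open>F j / (n choose j)\<close>. Counting pairs \<open>(T, e)\<close> with \<open>e \<in> T\<close> and
  \<open>|T| = j + 1\<close> in two ways, the total of \<open>f (T - {e})\<close> is \<open>(n - j) F j\<close>. Bounding each
  \<open>f (T - {e})\<close> by \<open>f T\<close> (monotonicity), and their sum over \<open>e\<close> from below by \<open>j f T\<close>
  (submodularity and \<open>f {} \<ge> 0\<close>), gives \<open>j F (j+1) \<le> (n - j) F j \<le> (j+1) F (j+1)\<close>.
  So \<open>g j = E_{D_j}[f]\<close> is nondecreasing while \<open>g j / j\<close> is nonincreasing, and the claim
  follows by comparing \<open>g k\<close> with \<open>g m\<close>, \<open>m = \<surd>n\<close>, on either side of \<open>k = m\<close>.\<close>

lemma submodular_sum_marginals_le: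
  assumes sub: "submodular_setfun N f" and "finite T" and "T \<subseteq> N"
  shows "(\<Sum>e\<in>T. f T - f (T - {e})) \<le> f T - f {}"
  using assms(2,3)
proof (induction T rule: finite_induct)
  case empty
  then show ?case by simp
next
  case (insert a U)
  have "U \<subseteq> N" "a \<in> N" using insert by auto
  have marginal_le: "f (insert a U) - f (insert a U - {e}) \<le> f U - f (U - {e})" if "e \<in> U" for e
    using sub[unfolded submodular_setfun_def, rule_format, of "U - {e}" "insert a U - {e}" e]
      \<open>U \<subseteq> N\<close> \<open>a \<in> N\<close> that
    by (auto simp: insert_absorb)
  have "(\<Sum>e\<in>insert a U. f (insert a U) - f (insert a U - {e}))
      = (f (insert a U) - f U) + (\<Sum>e\<in>U. f (insert a U) - f (insert a U - {e}))"
    using insert.hyps by simp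
  also have "\<dots> \<le> (f (insert a U) - f U) + (\<Sum>e\<in>U. f U - f (U - {e}))"
    using marginal_le by (intro add_left_mono sum_mono) auto
  also have "\<dots> \<le> (f (insert a U) - f U) + (f U - f {})"
    using insert.IH \<open>U \<subseteq> N\<close> by simp
  finally show ?case by simp
qed

lemma finite_subsets_card: "finite N \<Longrightarrow> finite {S. S \<subseteq> N \<and> card S = j}"
  by (rule finite_subset[of _ "Pow N"]) auto

lemma sum_subsets_card_Suc_remove:
  assumes "finite N"
  shows "(\<Sum>T | T \<subseteq> N \<and> card T = Suc j. \<Sum>e\<in>T. h (T - {e}))
       = (\<Sum>S | S \<subseteq> N \<and> card S = j. \<Sum>e\<in>N - S. h S)"
proof -
  let ?A = "{T. T \<subseteq> N \<and> card T = Suc j}"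
  let ?B = "{S. S \<subseteq> N \<and> card S = j}"
  have fin: "finite ?A" "finite ?B" "\<forall>T\<in>?A. finite T" "\<forall>S\<in>?B. finite (N - S)"
    using finite_subsets_card assms finite_subset by auto
  have "(\<Sum>T\<in>?A. \<Sum>e\<in>T. h (T - {e})) = (\<Sum>(T, e)\<in>Sigma ?A (\<lambda>T. T). h (T - {e}))"
    by (rule sum.Sigma[OF fin(1,3)])
  also have "\<dots> = (\<Sum>(S, e)\<in>Sigma ?B (\<lambda>S. N - S). h S)"
    by (rule sum.reindex_bij_witness[where i="\<lambda>(S, e). (insert e S, e)"
          and j="\<lambda>(T, e). (T - {e}, e)"])
       (use assms in \<open>auto simp: finite_subset\<close>)
  also have "\<dots> = (\<Sum>S\<in>?B. \<Sum>e\<in>N - S. h S)"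
    by (rule sum.Sigma[OF fin(2,4), symmetric])
  finally show ?thesis .
qed

definition level_sum :: "'a set \<Rightarrow> ('a set \<Rightarrow> real) \<Rightarrow> nat \<Rightarrow> real" where
  "level_sum N f j = (\<Sum>S | S \<subseteq> N \<and> card S = j. f S)"

lemma expect_unif_eq_level_sum:
  assumes "finite N" and "j \<le> card N"
  shows "expect_unif N j f = level_sum N f j / real (card N choose j)"
proof -
  obtain S where "S \<subseteq> N" "card S = j"
    using obtain_subset_with_card_n assms(2) by blast
  then have "{S. S \<subseteq> N \<and> card S = j} \<noteq> {}" by auto
  from integral_pmf_of_set[OF this finite_subsets_card[OF assms(1)]] show ?thesis
    unfolding expect_unif_def level_sum_def using n_subsets[OF assms(1)] by simp
qed

lemma sum_subsets_card_Suc_remove_eq_level_sum: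
  assumes "finite N"
  shows "(\<Sum>T | T \<subseteq> N \<and> card T = Suc j. \<Sum>e\<in>T. f (T - {e}))
       = real (card N - j) * level_sum N f j"
proof -
  have "(\<Sum>e\<in>N - S. f S) = real (card N - j) * f S" if "S \<subseteq> N" "card S = j" for S
    using that assms by (simp add: card_Diff_subset finite_subset)
  then show ?thesis
    unfolding sum_subsets_card_Suc_remove[OF assms] level_sum_def sum_distrib_left
    by (intro sum.cong) auto
qed

lemma level_sum_Suc_lower:
  assumes "finite N" and "monotone_setfun N f"
  shows "real (card N - j) * level_sum N f j \<le> real (Suc j) * level_sum N f (Suc j)"
proof -
  have "real (card N - j) * level_sum N f j
      = (\<Sum>T | T \<subseteq> N \<and> card T = Suc j. \<Sum>e\<in>T. f (T - {e}))"
    by (rule sum_subsets_card_Suc_remove_eq_level_sum[OF assms(1), symmetric])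
  also have "\<dots> \<le> (\<Sum>T | T \<subseteq> N \<and> card T = Suc j. \<Sum>e\<in>T. f T)"
    using assms(2) unfolding monotone_setfun_def by (intro sum_mono) auto
  also have "\<dots> = real (Suc j) * level_sum N f (Suc j)"
    by (simp add: level_sum_def sum_distrib_left)
  finally show ?thesis .
qed

lemma level_sum_Suc_upper:
  assumes "finite N" and "submodular_setfun N f" and "f {} \<ge> 0"
  shows "real j * level_sum N f (Suc j) \<le> real (card N - j) * level_sum N f j"
proof -
  have "real j * f T \<le> (\<Sum>e\<in>T. f (T - {e}))" if "T \<subseteq> N" "card T = Suc j" for T
  proof -
    have "finite T" using that assms(1) finite_subset by blast
    have "(\<Sum>e\<in>T. f T - f (T - {e})) = real (Suc j) * f T - (\<Sum>e\<in>T. f (T - {e}))"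
      using that by (simp add: sum_subtractf)
    then show ?thesis
      using submodular_sum_marginals_le[OF assms(2) \<open>finite T\<close> \<open>T \<subseteq> N\<close>] assms(3)
      by (simp add: algebra_simps)
  qed
  then have "real j * level_sum N f (Suc j)
      \<le> (\<Sum>T | T \<subseteq> N \<and> card T = Suc j. \<Sum>e\<in>T. f (T - {e}))"
    unfolding level_sum_def sum_distrib_left by (intro sum_mono) auto
  then show ?thesis
    unfolding sum_subsets_card_Suc_remove_eq_level_sum[OF assms(1)] .
qed

lemma real_Suc_mult_choose_Suc:
  "real (Suc j) * real (n choose Suc j) = real (n - j) * real (n choose j)"
proof -
  have "Suc j * (n choose Suc j) = (n - j) * (n choose j)"
    using binomial_absorption[of j n] binomial_absorb_comp[of n j] by simp
  then show ?thesis by (metis of_nat_mult)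
qed

lemma expect_unif_le_Suc:
  assumes "finite N" and "monotone_setfun N f" and "j < card N"
  shows "expect_unif N j f \<le> expect_unif N (Suc j) f"
proof -
  let ?n = "card N" and ?F = "level_sum N f"
  have pos: "real (?n choose j) > 0" "real (?n - j) > 0" using assms(3) by auto
  have "expect_unif N j f = real (?n - j) * ?F j / (real (?n - j) * real (?n choose j))"
    using expect_unif_eq_level_sum[OF assms(1)] assms(3) pos by simp
  also have "\<dots> \<le> real (Suc j) * ?F (Suc j) / (real (Suc j) * real (?n choose Suc j))"
    unfolding real_Suc_mult_choose_Suc
    using level_sum_Suc_lower[OF assms(1,2), of j] pos by (intro divide_right_mono) auto
  also have "\<dots> = expect_unif N (Suc j) f"
    using expect_unif_eq_level_sum[OF assms(1)] assms(3) by simp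
  finally show ?thesis .
qed

lemma expect_unif_Suc_div_le:
  assumes "finite N" and "submodular_setfun N f" and "f {} \<ge> 0"
    and "1 \<le> j" and "j < card N"
  shows "expect_unif N (Suc j) f / real (Suc j) \<le> expect_unif N j f / real j"
proof -
  let ?n = "card N" and ?F = "level_sum N f"
  have pos: "real (?n choose j) > 0" "real (?n choose Suc j) > 0" "real j > 0"
    using assms(4,5) by auto
  have "real j * expect_unif N (Suc j) f = real j * ?F (Suc j) / real (?n choose Suc j)"
    using expect_unif_eq_level_sum[OF assms(1)] assms(5) by simp
  also have "\<dots> \<le> real (?n - j) * ?F j / real (?n choose Suc j)"
    using level_sum_Suc_upper[OF assms(1-3), of j] pos by (intro divide_right_mono) auto
  also have "\<dots> = real (Suc j) * (?F j / real (?n choose j))"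
    using real_Suc_mult_choose_Suc[of j ?n] pos by (simp add: field_simps del: of_nat_diff of_nat_Suc)
  also have "\<dots> = real (Suc j) * expect_unif N j f"
    using expect_unif_eq_level_sum[OF assms(1)] assms(5) by simp
  finally show ?thesis
    using pos by (simp add: field_simps)
qed

lemma expect_unif_mono:
  assumes "finite N" and "monotone_setfun N f" and "j \<le> l" and "l \<le> card N"
  shows "expect_unif N j f \<le> expect_unif N l f"
  using assms(3,4)
proof (induction l rule: dec_induct)
  case (step i)
  then show ?case using expect_unif_le_Suc[OF assms(1,2), of i] by simp
qed simp

lemma expect_unif_div_antimono:
  assumes "finite N" and "submodular_setfun N f" and "f {} \<ge> 0"
    and "1 \<le> j" and "j \<le> l" and "l \<le> card N"
  shows "expect_unif N l f / real l \<le> expect_unif N j f / real j"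
  using assms(5,6)
proof (induction l rule: dec_induct)
  case (step i)
  then show ?case using expect_unif_Suc_div_le[OF assms(1-3), of i] assms(4) by simp
qed simp

theorem lemma23:
  fixes N :: "'a set" and f :: "'a set \<Rightarrow> real" and n m k :: nat and Sstar :: "'a set"
  assumes "finite N"
    and "card N = n"
    and "m * m = n"
    and "\<forall>S. S \<subseteq> N \<longrightarrow> f S \<ge> 0"
    and "monotone_setfun N f"
    and "submodular_setfun N f"
    and "1 \<le> k" and "k \<le> n"
    and "Sstar \<subseteq> N" and "card Sstar \<le> k"
    and "\<forall>T. T \<subseteq> N \<and> card T \<le> k \<longrightarrow> f T \<le> f Sstar"
    and "expect_unif N m f \<ge> f Sstar / 4"
  shows "expect_unif N k f \<ge> min (1/4) (real k / (4 * real m)) * f Sstar"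
proof -
  have "f Sstar \<ge> 0" "f {} \<ge> 0" using assms(4,9) by auto
  have "1 \<le> m" using assms(3,7,8) by (cases m) auto
  then have "m \<le> n" using assms(3) by (metis mult_le_mono1 mult_1)
  show ?thesis
  proof (cases "m \<le> k")
    case True
    then have "f Sstar / 4 \<le> expect_unif N k f"
      using expect_unif_mono[OF assms(1,5) True] assms(2,8,12) by simp
    moreover have "min (1/4) (real k / (4 * real m)) * f Sstar \<le> 1/4 * f Sstar"
      using \<open>f Sstar \<ge> 0\<close> by (intro mult_right_mono) simp_all
    ultimately show ?thesis by linarith
  next
    case False
    then have "expect_unif N m f / real m \<le> expect_unif N k f / real k"
      using expect_unif_div_antimono[OF assms(1,6) \<open>f {} \<ge> 0\<close> assms(7)] \<open>m \<le> n\<close> assms(2)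
      by simp
    then have "real k * expect_unif N m f \<le> real m * expect_unif N k f"
      using assms(7) \<open>1 \<le> m\<close> by (simp add: field_simps)
    moreover have "real k * (f Sstar / 4) \<le> real k * expect_unif N m f"
      using assms(12) by (intro mult_left_mono) auto
    ultimately have "real k / (4 * real m) * f Sstar \<le> expect_unif N k f"
      using \<open>1 \<le> m\<close> by (simp add: field_simps)
    moreover have "min (1/4) (real k / (4 * real m)) * f Sstar \<le> real k / (4 * real m) * f Sstar"
      using \<open>f Sstar \<ge> 0\<close> by (intro mult_right_mono) simp_all
    ultimately show ?thesis by linarith
  qed
qed

end
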